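(* Let $\varphi$ be an Orlicz $N$-function with Young–Fenchel transform $\psi$. Let $\{X_{k,n},k\ge1,n\ge1\}$ be a double array of $\varphi$-subgaussian random variables, let $g$ be a positive non-decreasing function, set $a_{m,j}=g(\ln(mj))\psi^{-1}(\ln(mj))$, $Y_{m,j}=\max_{1\le k\le m,1\le n\le j}X_{k,n}-a_{m,j}$ and $Y^+_{m,j}=\max(Y_{m,j},0)$. Suppose there is a positive-valued function $f$ such that for all $m,j\ge1$, $1\le k\le m$, $1\le n\le j$, $$\frac{g(\ln(mj))}{\tau_\varphi(X_{k,n})}\ge f\left(\frac{mj}{kn}\right)\ge1,$$ and $f(x)\ge c_0>0$ for all $x\ge1$. Then for every $\alpha>2-c_0$, $$\sum_{m=1}^\infty\sum_{j=1}^\infty(mj)^{-\alpha}P(Y^+_{m,j}>0)<+\infty.$$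
   Context: An Orlicz $N$-function is a continuous even convex function $\varphi:\mathbb R\to\mathbb R$ with $\varphi(0)=0$, increasing on $(0,\infty)$, with $\varphi(x)/x\to0$ as $x\to0$ and $\varphi(x)/x\to+\infty$ as $x\to+\infty$. The Young–Fenchel transform is $\psi(x)=\sup_{y\in\mathbb R}(xy-\varphi(y))$; $\psi^{-1}$ is the inverse of $\psi$ on $[0,\infty)$. A random variable $X$ is $\varphi$-subgaussian if $EX=0$ and there is a finite $a>0$ with $E\exp(tX)\le\exp(\varphi(at))$ for all $t$; $\tau_\varphi(X)=\inf\{a>0:E\exp(tX)\le\exp(\varphi(at))\ \forall t\}$. *)

theory Defs
  imports "HOL-Probability.Probability"
begin

definition N_function :: "(real \<Rightarrow> real) \<Rightarrow> bool" where
  "N_function \<phi> \<longleftrightarrow>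
     continuous_on UNIV \<phi> \<and>
     (\<forall>x. \<phi> (- x) = \<phi> x) \<and>
     convex_on UNIV \<phi> \<and>
     \<phi> 0 = 0 \<and>
     strict_mono_on {0<..} \<phi> \<and>
     ((\<lambda>x. \<phi> x / x) \<longlongrightarrow> 0) (at 0) \<and>
     filterlim (\<lambda>x. \<phi> x / x) at_top at_top"

definition young_fenchel :: "(real \<Rightarrow> real) \<Rightarrow> real \<Rightarrow> real" where
  "young_fenchel \<phi> x = (SUP y. x * y - \<phi> y)"

definition young_fenchel_inv :: "(real \<Rightarrow> real) \<Rightarrow> real \<Rightarrow> real" where
  "young_fenchel_inv \<phi> t = (THE x. 0 \<le> x \<and> young_fenchel \<phi> x = t)"

definition mgf_bound :: "'a measure \<Rightarrow> (real \<Rightarrow> real) \<Rightarrow> ('a \<Rightarrow> real) \<Rightarrow> real \<Rightarrow> bool" where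
  "mgf_bound M \<phi> X a \<longleftrightarrow>
     (\<forall>t. (\<integral>\<^sup>+ \<omega>. ennreal (exp (t * X \<omega>)) \<partial>M) \<le> ennreal (exp (\<phi> (a * t))))"

definition phi_subgaussian :: "'a measure \<Rightarrow> (real \<Rightarrow> real) \<Rightarrow> ('a \<Rightarrow> real) \<Rightarrow> bool" where
  "phi_subgaussian M \<phi> X \<longleftrightarrow>
     X \<in> borel_measurable M \<and> integrable M X \<and> (\<integral>\<omega>. X \<omega> \<partial>M) = 0 \<and>
     (\<exists>a>0. mgf_bound M \<phi> X a)"

definition tau_phi :: "'a measure \<Rightarrow> (real \<Rightarrow> real) \<Rightarrow> ('a \<Rightarrow> real) \<Rightarrow> real" where
  "tau_phi M \<phi> X = Inf {a. a > 0 \<and> mgf_bound M \<phi> X a}"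

definition array_max :: "(nat \<Rightarrow> nat \<Rightarrow> 'a \<Rightarrow> real) \<Rightarrow> nat \<Rightarrow> nat \<Rightarrow> 'a \<Rightarrow> real" where
  "array_max X m j \<omega> = Max {X k n \<omega> | k n. 1 \<le> k \<and> k \<le> m \<and> 1 \<le> n \<and> n \<le> j}"

end

theory Submission
  imports Defs
begin

text \<open>
  For a \<open>\<phi>\<close>-subgaussian \<open>X\<close> the exponential Chebyshev inequality, optimised over the
  exponent, gives \<open>P(X > u) \<le> exp (- \<psi> (u / \<tau>\<^sub>\<phi>(X)))\<close>. Since \<open>\<psi>\<close> is convex with
  \<open>\<psi>(0) = 0\<close>, \<open>\<psi>(c x) \<ge> c \<psi>(x)\<close> for \<open>c \<ge> 1\<close>; with \<open>u = g(ln(mj)) \<psi>\<inverse>(ln(mj))\<close> and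
  \<open>g(ln(mj)) / \<tau>\<^sub>\<phi>(X\<^sub>k\<^sub>,\<^sub>n) \<ge> f \<ge> max 1 c\<^sub>0\<close> this yields \<open>P(X\<^sub>k\<^sub>,\<^sub>n > u) \<le> (mj)\<^sup>-\<^sup>c\<^sup>0\<close>.
  A union bound over the \<open>mj\<close> entries of the rectangle gives \<open>P(Y\<^sup>+\<^sub>m\<^sub>,\<^sub>j > 0) \<le> (mj)\<^sup>1\<^sup>-\<^sup>c\<^sup>0\<close>,
  so the double series is dominated by \<open>\<Sum> m\<^sup>-\<^sup>\<beta> j\<^sup>-\<^sup>\<beta>\<close> with \<open>\<beta> = \<alpha> + c\<^sub>0 - 1 > 1\<close>.
\<close>

lemma N_function_nonneg:
  assumes "N_function \<phi>" shows "\<phi> y \<ge> 0"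
proof -
  have c: "convex_on UNIV \<phi>" and e: "\<phi> (- y) = \<phi> y" and z: "\<phi> 0 = 0"
    using assms unfolding N_function_def by auto
  have "\<phi> ((1 - 1/2) *\<^sub>R y + (1/2) *\<^sub>R (-y)) \<le> (1 - 1/2) * \<phi> y + (1/2) * \<phi> (-y)"
    by (rule convex_onD[OF c]) auto
  then show ?thesis using e z by simp
qed

lemma N_function_abs:
  assumes "N_function \<phi>" shows "\<phi> \<bar>x\<bar> = \<phi> x"
  using assms unfolding N_function_def by (cases "x \<ge> 0") auto

lemma N_function_mono_abs:
  assumes "N_function \<phi>" "\<bar>x\<bar> \<le> \<bar>y\<bar>" shows "\<phi> x \<le> \<phi> y"
proof (cases "x = 0")
  case True
  then show ?thesis using assms N_function_nonneg by (simp add: N_function_def)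
next
  case False
  have "strict_mono_on {0<..} \<phi>" using assms(1) unfolding N_function_def by auto
  then have "\<phi> \<bar>x\<bar> \<le> \<phi> \<bar>y\<bar>"
    by (rule strict_mono_on_leD) (use False assms(2) in auto)
  then show ?thesis using N_function_abs[OF assms(1)] by simp
qed

lemma young_fenchel_bdd_above:
  assumes "N_function \<phi>" shows "bdd_above (range (\<lambda>y. x * y - \<phi> y))"
proof -
  have "filterlim (\<lambda>x. \<phi> x / x) at_top at_top"
    using assms unfolding N_function_def by auto
  then have "eventually (\<lambda>y. \<phi> y / y \<ge> \<bar>x\<bar>) at_top"
    by (simp add: filterlim_at_top)
  then obtain R0 where R0: "\<And>y. y \<ge> R0 \<Longrightarrow> \<phi> y / y \<ge> \<bar>x\<bar>"
    by (auto simp: eventually_at_top_linorder)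
  define R where "R = max R0 1"
  have R: "\<phi> y / y \<ge> \<bar>x\<bar>" if "y \<ge> R" for y using R0 that by (simp add: R_def)
  have "R \<ge> 1" by (simp add: R_def)
  have "x * y - \<phi> y \<le> \<bar>x\<bar> * R" for y
  proof -
    have xy: "x * y \<le> \<bar>x\<bar> * \<bar>y\<bar>" by (simp add: abs_mult[symmetric])
    show ?thesis
    proof (cases "\<bar>y\<bar> \<ge> R")
      case True
      then have "\<bar>x\<bar> * \<bar>y\<bar> \<le> \<phi> \<bar>y\<bar>"
        using R[of "\<bar>y\<bar>"] \<open>R \<ge> 1\<close> by (simp add: pos_le_divide_eq)
      moreover have "0 \<le> \<bar>x\<bar> * R" using \<open>R \<ge> 1\<close> by simp
      ultimately show ?thesis using xy N_function_abs[OF assms, of y] by linarith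
    next
      case False
      then have "\<bar>x\<bar> * \<bar>y\<bar> \<le> \<bar>x\<bar> * R" by (simp add: mult_left_mono)
      then show ?thesis using xy N_function_nonneg[OF assms, of y] by linarith
    qed
  qed
  then show ?thesis by (intro bdd_aboveI2)
qed

lemma young_fenchel_ge:
  assumes "N_function \<phi>" shows "x * y - \<phi> y \<le> young_fenchel \<phi> x"
  unfolding young_fenchel_def by (rule cSUP_upper[OF _ young_fenchel_bdd_above[OF assms]]) auto

lemma young_fenchel_le:
  assumes "\<And>y. x * y - \<phi> y \<le> B" shows "young_fenchel \<phi> x \<le> B"
  unfolding young_fenchel_def by (rule cSUP_least) (auto intro: assms)

lemma young_fenchel_0:
  assumes "N_function \<phi>" shows "young_fenchel \<phi> 0 = 0"
proof (rule antisym)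
  show "young_fenchel \<phi> 0 \<le> 0"
    by (rule young_fenchel_le) (simp add: N_function_nonneg[OF assms])
  show "0 \<le> young_fenchel \<phi> 0"
    using young_fenchel_ge[OF assms, of 0 0] assms by (simp add: N_function_def)
qed

lemma young_fenchel_pos:
  assumes "N_function \<phi>" "x > 0" shows "young_fenchel \<phi> x > 0"
proof -
  have "((\<lambda>y. \<phi> y / y) \<longlongrightarrow> 0) (at_right 0)"
    using assms(1) unfolding N_function_def by (auto intro: filterlim_at_split[THEN iffD1, THEN conjunct2])
  then have "eventually (\<lambda>y. \<phi> y / y < x) (at_right 0)"
    using assms(2) by (auto dest: order_tendstoD)
  moreover have "eventually (\<lambda>y. y > 0) (at_right (0::real))"
    by (rule eventually_at_right_less)
  ultimately have "eventually (\<lambda>y. \<phi> y / y < x \<and> y > 0) (at_right 0)"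
    by (rule eventually_conj)
  then have "\<exists>y. \<phi> y / y < x \<and> y > 0" by (rule eventually_happens'[rotated]) simp
  then obtain y where "y > 0" "\<phi> y / y < x" by blast
  then have "\<phi> y < x * y" by (simp add: divide_less_eq)
  then show ?thesis using young_fenchel_ge[OF assms(1), of x y] by linarith
qed

lemma young_fenchel_superhomogeneous:
  assumes "N_function \<phi>" "c \<ge> 1" shows "c * young_fenchel \<phi> u \<le> young_fenchel \<phi> (c * u)"
proof -
  have "young_fenchel \<phi> u \<le> young_fenchel \<phi> (c * u) / c"
  proof (rule young_fenchel_le)
    fix y
    have "c * (u * y - \<phi> y) \<le> (c * u) * y - \<phi> y"
      using N_function_nonneg[OF assms(1), of y] assms(2)
      by (simp add: algebra_simps mult_le_cancel_right1)
    also have "\<dots> \<le> young_fenchel \<phi> (c * u)" by (rule young_fenchel_ge[OF assms(1)])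
    finally show "u * y - \<phi> y \<le> young_fenchel \<phi> (c * u) / c"
      using assms(2) by (simp add: le_divide_eq mult.commute)
  qed
  then show ?thesis using assms(2) by (simp add: le_divide_eq mult.commute)
qed

lemma young_fenchel_strict_mono:
  assumes "N_function \<phi>" shows "strict_mono_on {0..} (young_fenchel \<phi>)"
proof (rule strict_mono_onI)
  fix a b :: real assume "a \<in> {0..}" "a < b"
  show "young_fenchel \<phi> a < young_fenchel \<phi> b"
  proof (cases "a = 0")
    case True
    then show ?thesis using young_fenchel_0 young_fenchel_pos assms \<open>a < b\<close> by simp
  next
    case False
    with \<open>a \<in> {0..}\<close> have "a > 0" by simp
    have "young_fenchel \<phi> a < (b / a) * young_fenchel \<phi> a"
      using young_fenchel_pos[OF assms \<open>a > 0\<close>] \<open>a > 0\<close> \<open>a < b\<close> by (simp add: field_simps)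
    also have "\<dots> \<le> young_fenchel \<phi> ((b / a) * a)"
      using \<open>a > 0\<close> \<open>a < b\<close> by (intro young_fenchel_superhomogeneous[OF assms]) simp
    finally show ?thesis using \<open>a > 0\<close> by simp
  qed
qed

lemma convex_young_fenchel:
  assumes "N_function \<phi>" shows "convex_on UNIV (young_fenchel \<phi>)"
proof (rule convex_onI)
  fix t x y :: real assume t: "t > 0" "t < 1"
  show "young_fenchel \<phi> ((1 - t) *\<^sub>R x + t *\<^sub>R y)
          \<le> (1 - t) * young_fenchel \<phi> x + t * young_fenchel \<phi> y"
  proof (rule young_fenchel_le)
    fix z
    have "((1 - t) *\<^sub>R x + t *\<^sub>R y) * z - \<phi> z = (1 - t) * (x * z - \<phi> z) + t * (y * z - \<phi> z)"
      by (simp add: algebra_simps)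
    also have "\<dots> \<le> (1 - t) * young_fenchel \<phi> x + t * young_fenchel \<phi> y"
      using t young_fenchel_ge[OF assms, of x z] young_fenchel_ge[OF assms, of y z]
      by (intro add_mono mult_left_mono) auto
    finally show "((1 - t) *\<^sub>R x + t *\<^sub>R y) * z - \<phi> z
                    \<le> (1 - t) * young_fenchel \<phi> x + t * young_fenchel \<phi> y" .
  qed
qed auto

lemma continuous_young_fenchel:
  assumes "N_function \<phi>" shows "continuous_on UNIV (young_fenchel \<phi>)"
  by (rule convex_on_continuous[OF _ convex_young_fenchel[OF assms]]) auto

lemma young_fenchel_inv:
  assumes "N_function \<phi>" "L \<ge> 0"
  shows "young_fenchel_inv \<phi> L \<ge> 0" and "young_fenchel \<phi> (young_fenchel_inv \<phi> L) = L"
proof -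
  have "\<exists>x. 0 \<le> x \<and> x \<le> L + \<phi> 1 \<and> young_fenchel \<phi> x = L"
  proof (rule IVT')
    show "young_fenchel \<phi> 0 \<le> L" using young_fenchel_0[OF assms(1)] assms(2) by simp
    show "L \<le> young_fenchel \<phi> (L + \<phi> 1)" using young_fenchel_ge[OF assms(1), of "L + \<phi> 1" 1] by simp
    show "0 \<le> L + \<phi> 1" using assms N_function_nonneg[OF assms(1), of 1] by simp
    show "continuous_on {0..L + \<phi> 1} (young_fenchel \<phi>)"
      using continuous_young_fenchel[OF assms(1)] by (rule continuous_on_subset) auto
  qed
  then obtain x where x: "0 \<le> x" "young_fenchel \<phi> x = L" by blast
  have "young_fenchel_inv \<phi> L = x"
    unfolding young_fenchel_inv_def
  proof (rule the_equality)
    fix y assume "0 \<le> y \<and> young_fenchel \<phi> y = L"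
    then show "y = x"
      using strict_mono_on_eqD[OF young_fenchel_strict_mono[OF assms(1)]] x by force
  qed (use x in simp)
  with x show "young_fenchel_inv \<phi> L \<ge> 0" "young_fenchel \<phi> (young_fenchel_inv \<phi> L) = L"
    by simp_all
qed

lemma mgf_bound_mono:
  assumes "N_function \<phi>" "mgf_bound M \<phi> X a" "0 \<le> a" "a \<le> b"
  shows "mgf_bound M \<phi> X b"
  unfolding mgf_bound_def
proof
  fix t
  have "\<phi> (a * t) \<le> \<phi> (b * t)"
    using assms(3,4) by (intro N_function_mono_abs[OF assms(1)]) (simp add: abs_mult mult_right_mono)
  then show "(\<integral>\<^sup>+ \<omega>. ennreal (exp (t * X \<omega>)) \<partial>M) \<le> ennreal (exp (\<phi> (b * t)))"
    using assms(2) unfolding mgf_bound_def by (meson order_trans ennreal_leI exp_le_cancel_iff)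
qed

lemma mgf_bound_gt_tau_phi:
  assumes "N_function \<phi>" "phi_subgaussian M \<phi> X" "tau_phi M \<phi> X < b"
  shows "mgf_bound M \<phi> X b"
proof -
  let ?S = "{a. a > 0 \<and> mgf_bound M \<phi> X a}"
  have "?S \<noteq> {}" using assms(2) unfolding phi_subgaussian_def by auto
  moreover have "Inf ?S < b" using assms(3) unfolding tau_phi_def .
  ultimately have "\<exists>a\<in>?S. a < b" by (rule cInf_lessD)
  then obtain a where "a \<in> ?S" "a < b" by blast
  then show ?thesis using mgf_bound_mono[OF assms(1), of M X a b] by auto
qed

lemma mgf_bound_tau_phi:
  assumes "N_function \<phi>" "phi_subgaussian M \<phi> X"
  shows "mgf_bound M \<phi> X (tau_phi M \<phi> X)"
  unfolding mgf_bound_def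
proof
  fix t
  let ?\<tau> = "tau_phi M \<phi> X"
  have "isCont \<phi> (?\<tau> * t)"
    using assms(1) unfolding N_function_def by (simp add: continuous_on_eq_continuous_at)
  moreover have "((\<lambda>b. b * t) \<longlongrightarrow> ?\<tau> * t) (at_right ?\<tau>)"
    by (intro tendsto_intros)
  ultimately have "((\<lambda>b. \<phi> (b * t)) \<longlongrightarrow> \<phi> (?\<tau> * t)) (at_right ?\<tau>)"
    by (rule isCont_tendsto_compose)
  then have lim: "((\<lambda>b. ennreal (exp (\<phi> (b * t)))) \<longlongrightarrow> ennreal (exp (\<phi> (?\<tau> * t)))) (at_right ?\<tau>)"
    by (intro tendsto_ennrealI tendsto_exp)
  have bound: "eventually (\<lambda>b. (\<integral>\<^sup>+ \<omega>. ennreal (exp (t * X \<omega>)) \<partial>M) \<le> ennreal (exp (\<phi> (b * t))))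
                   (at_right ?\<tau>)"
    using eventually_at_right_less[of ?\<tau>]
    by eventually_elim (use mgf_bound_gt_tau_phi[OF assms] in \<open>auto simp: mgf_bound_def\<close>)
  show "(\<integral>\<^sup>+ \<omega>. ennreal (exp (t * X \<omega>)) \<partial>M) \<le> ennreal (exp (\<phi> (?\<tau> * t)))"
    by (rule tendsto_lowerbound[OF lim bound]) simp
qed

lemma mgf_bound_ge_tau_phi:
  assumes "N_function \<phi>" "phi_subgaussian M \<phi> X" "tau_phi M \<phi> X \<le> b"
  shows "mgf_bound M \<phi> X b"
  using assms mgf_bound_gt_tau_phi mgf_bound_tau_phi by (cases "tau_phi M \<phi> X < b") auto

lemma (in prob_space) prob_gt_le_exp_phi:
  assumes N: "N_function \<phi>" and X: "X \<in> borel_measurable M"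
    and "b > 0" and mgf: "mgf_bound M \<phi> X b" and "a \<ge> 0"
  shows "prob {\<omega> \<in> space M. X \<omega> > a} \<le> exp (\<phi> s - s * (a / b))"
proof (cases "s > 0")
  case False
  then have "s * (a / b) \<le> 0" using \<open>a \<ge> 0\<close> \<open>b > 0\<close> by (intro mult_nonpos_nonneg) auto
  then have "1 \<le> exp (\<phi> s - s * (a / b))" using N_function_nonneg[OF N, of s] by simp
  with prob_le_1 show ?thesis by (rule order_trans)
next
  case True
  define t where "t = s / b"
  have "t > 0" using True \<open>b > 0\<close> by (simp add: t_def)
  let ?A = "{\<omega> \<in> space M. X \<omega> > a}"
  have [measurable]: "X \<in> borel_measurable M" by (rule X)
  have "emeasure M ?A = (\<integral>\<^sup>+ \<omega>. indicator ?A \<omega> \<partial>M)" by simp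
  also have "\<dots> \<le> (\<integral>\<^sup>+ \<omega>. ennreal (exp (- t * a)) * ennreal (exp (t * X \<omega>)) \<partial>M)"
  proof (rule nn_integral_mono)
    fix \<omega> assume "\<omega> \<in> space M"
    have "X \<omega> > a \<Longrightarrow> 1 \<le> exp (- t * a) * exp (t * X \<omega>)"
      using \<open>t > 0\<close> by (simp add: exp_add[symmetric] algebra_simps)
    then show "indicator ?A \<omega> \<le> ennreal (exp (- t * a)) * ennreal (exp (t * X \<omega>))"
      by (auto simp: indicator_def ennreal_mult[symmetric])
  qed
  also have "\<dots> = ennreal (exp (- t * a)) * (\<integral>\<^sup>+ \<omega>. ennreal (exp (t * X \<omega>)) \<partial>M)"
    by (rule nn_integral_cmult) measurable
  also have "\<dots> \<le> ennreal (exp (- t * a)) * ennreal (exp (\<phi> (b * t)))"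
    using mgf unfolding mgf_bound_def by (intro mult_left_mono) auto
  also have "\<dots> = ennreal (exp (\<phi> s - s * (a / b)))"
    using \<open>b > 0\<close> by (simp add: t_def ennreal_mult[symmetric] exp_add[symmetric] algebra_simps)
  finally show ?thesis by (simp add: emeasure_eq_measure)
qed

lemma (in prob_space) prob_gt_le_exp_young_fenchel:
  assumes "N_function \<phi>" "X \<in> borel_measurable M" "b > 0" "mgf_bound M \<phi> X b" "a \<ge> 0"
  shows "prob {\<omega> \<in> space M. X \<omega> > a} \<le> exp (- young_fenchel \<phi> (a / b))"
proof -
  define p where "p = prob {\<omega> \<in> space M. X \<omega> > a}"
  show ?thesis
  proof (cases "p = 0")
    case False
    then have "p > 0" unfolding p_def using measure_nonneg by (metis less_eq_real_def)
    have "young_fenchel \<phi> (a / b) \<le> - ln p"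
    proof (rule young_fenchel_le)
      fix y
      have "ln p \<le> \<phi> y - y * (a / b)"
        using prob_gt_le_exp_phi[OF assms, of y] \<open>p > 0\<close> unfolding p_def[symmetric]
        by (metis ln_exp ln_le_cancel_iff exp_gt_zero)
      then show "a / b * y - \<phi> y \<le> - ln p" by (simp add: algebra_simps)
    qed
    have "p = exp (ln p)" using \<open>p > 0\<close> by simp
    also have "\<dots> \<le> exp (- young_fenchel \<phi> (a / b))"
      using \<open>young_fenchel \<phi> (a / b) \<le> - ln p\<close> by simp
    finally show ?thesis by (simp add: p_def)
  qed (simp add: p_def)
qed

lemma (in prob_space) prob_gt_young_fenchel_inv_le:
  assumes N: "N_function \<phi>" and sg: "phi_subgaussian M \<phi> Y"
    and "G > 0" "F \<ge> 1" "F * tau_phi M \<phi> Y \<le> G" "L \<ge> 0"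
  shows "prob {\<omega> \<in> space M. Y \<omega> > G * young_fenchel_inv \<phi> L} \<le> exp (- (F * L))"
proof -
  define b where "b = G / F"
  have "b > 0" using \<open>G > 0\<close> \<open>F \<ge> 1\<close> by (simp add: b_def)
  have "tau_phi M \<phi> Y \<le> b"
    using \<open>F * tau_phi M \<phi> Y \<le> G\<close> \<open>F \<ge> 1\<close> by (simp add: b_def le_divide_eq mult.commute)
  then have mgf: "mgf_bound M \<phi> Y b" by (rule mgf_bound_ge_tau_phi[OF N sg])
  define u where "u = young_fenchel_inv \<phi> L"
  have u: "u \<ge> 0" "young_fenchel \<phi> u = L" using young_fenchel_inv[OF N \<open>L \<ge> 0\<close>] by (simp_all add: u_def)
  have "Y \<in> borel_measurable M" using sg by (simp add: phi_subgaussian_def)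
  then have "prob {\<omega> \<in> space M. Y \<omega> > G * u} \<le> exp (- young_fenchel \<phi> (G * u / b))"
    by (rule prob_gt_le_exp_young_fenchel[OF N _ \<open>b > 0\<close> mgf]) (use \<open>G > 0\<close> u in simp)
  also have "G * u / b = F * u" using \<open>G > 0\<close> \<open>F \<ge> 1\<close> by (simp add: b_def)
  also have "exp (- young_fenchel \<phi> (F * u)) \<le> exp (- (F * L))"
    using young_fenchel_superhomogeneous[OF N \<open>F \<ge> 1\<close>, of u] u by simp
  finally show ?thesis by (simp add: u_def)
qed

lemma array_max_gt_iff:
  assumes "1 \<le> m" "1 \<le> j"
  shows "c < array_max X m j \<omega> \<longleftrightarrow> (\<exists>k\<in>{1..m}. \<exists>n\<in>{1..j}. c < X k n \<omega>)"
proof -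
  have "{X k n \<omega> | k n. 1 \<le> k \<and> k \<le> m \<and> 1 \<le> n \<and> n \<le> j} = (\<lambda>(k, n). X k n \<omega>) ` ({1..m} \<times> {1..j})"
    by auto blast
  moreover have "({1..m} \<times> {1..j}) \<noteq> {}" using assms by auto
  ultimately show ?thesis unfolding array_max_def by (subst Max_gr_iff) auto
qed

lemma (in prob_space) prob_array_max_gt_le:
  assumes N: "N_function \<phi>" and "1 \<le> m" "1 \<le> j" "G > 0"
    and sg: "\<And>k n. k \<in> {1..m} \<Longrightarrow> n \<in> {1..j} \<Longrightarrow> phi_subgaussian M \<phi> (X k n)"
    and F: "\<And>k n. k \<in> {1..m} \<Longrightarrow> n \<in> {1..j} \<Longrightarrow> 1 \<le> F k n \<and> c0 \<le> F k n"
    and F_tau: "\<And>k n. k \<in> {1..m} \<Longrightarrow> n \<in> {1..j} \<Longrightarrow> F k n * tau_phi M \<phi> (X k n) \<le> G"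
  shows "prob {\<omega> \<in> space M. array_max X m j \<omega> > G * young_fenchel_inv \<phi> (ln (real (m * j)))}
           \<le> real (m * j) powr (1 - c0)"
proof -
  define x where "x = real (m * j)"
  have "1 \<le> m * j" using mult_le_mono[OF \<open>1 \<le> m\<close> \<open>1 \<le> j\<close>] by simp
  then have "x \<ge> 1" unfolding x_def by (metis of_nat_1 of_nat_le_iff)
  define I where "I = {1..m} \<times> {1..j}"
  define A where "A = (\<lambda>(k, n). {\<omega> \<in> space M. X k n \<omega> > G * young_fenchel_inv \<phi> (ln x)})"
  have A_sets: "A i \<in> events" if "i \<in> I" for i
  proof -
    obtain k n where i: "i = (k, n)" by force
    then have [measurable]: "X k n \<in> borel_measurable M"
      using sg that by (simp add: I_def phi_subgaussian_def)
    show ?thesis unfolding i A_def by simp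
  qed
  have prob_A: "prob (A i) \<le> x powr (- c0)" if "i \<in> I" for i
  proof -
    obtain k n where i: "i = (k, n)" by force
    with that have kn: "k \<in> {1..m}" "n \<in> {1..j}" by (auto simp: I_def)
    have "prob (A i) \<le> exp (- (F k n * ln x))"
      unfolding i A_def prod.case
      by (rule prob_gt_young_fenchel_inv_le[OF N sg[OF kn] \<open>G > 0\<close> _ F_tau[OF kn]])
        (use F[OF kn] \<open>x \<ge> 1\<close> in auto)
    also have "\<dots> = x powr (- F k n)" using \<open>x \<ge> 1\<close> by (simp add: powr_def)
    also have "\<dots> \<le> x powr (- c0)" using F[OF kn] \<open>x \<ge> 1\<close> by (intro powr_mono) auto
    finally show ?thesis .
  qed
  have "{\<omega> \<in> space M. array_max X m j \<omega> > G * young_fenchel_inv \<phi> (ln x)} = (\<Union>i\<in>I. A i)"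
    using \<open>1 \<le> m\<close> \<open>1 \<le> j\<close> by (auto simp: array_max_gt_iff I_def A_def)
  then have "prob {\<omega> \<in> space M. array_max X m j \<omega> > G * young_fenchel_inv \<phi> (ln x)}
               \<le> (\<Sum>i\<in>I. prob (A i))"
    using A_sets by (simp add: measure_UNION_le I_def)
  also have "\<dots> \<le> (\<Sum>i\<in>I. x powr (- c0))" by (rule sum_mono) (rule prob_A)
  also have "\<dots> = x powr (1 - c0)"
    using \<open>x \<ge> 1\<close> by (simp add: I_def x_def powr_diff divide_inverse powr_minus)
  finally show ?thesis by (simp add: x_def)
qed

lemma (in prob_space) prob_array_max_excess_pos_le:
  assumes N: "N_function \<phi>" and "1 \<le> m" "1 \<le> j"
    and sg: "\<And>k n. 1 \<le> k \<Longrightarrow> 1 \<le> n \<Longrightarrow> phi_subgaussian M \<phi> (X k n)"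
    and g_pos: "\<And>x. 0 \<le> x \<Longrightarrow> g x > 0"
    and f: "\<And>k n. 1 \<le> k \<Longrightarrow> k \<le> m \<Longrightarrow> 1 \<le> n \<Longrightarrow> n \<le> j \<Longrightarrow>
              f (real (m * j) / real (k * n)) * tau_phi M \<phi> (X k n) \<le> g (ln (real (m * j)))
            \<and> f (real (m * j) / real (k * n)) \<ge> 1"
    and f_c0: "\<And>x. 1 \<le> x \<Longrightarrow> f x \<ge> c0"
  shows "prob {\<omega> \<in> space M.
           max (array_max X m j \<omega> - g (ln (real (m * j))) * young_fenchel_inv \<phi> (ln (real (m * j)))) 0 > 0}
         \<le> real (m * j) powr (1 - c0)"
proof -
  define F where "F k n = f (real (m * j) / real (k * n))" for k n
  have "1 \<le> m * j" using mult_le_mono[OF \<open>1 \<le> m\<close> \<open>1 \<le> j\<close>] by simp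
  then have "1 \<le> real (m * j)" by (metis of_nat_1 of_nat_le_iff)
  then have "ln (real (m * j)) \<ge> 0" by simp
  have F: "1 \<le> F k n \<and> c0 \<le> F k n" "F k n * tau_phi M \<phi> (X k n) \<le> g (ln (real (m * j)))"
    if "k \<in> {1..m}" "n \<in> {1..j}" for k n
  proof -
    have "real (k * n) \<le> real (m * j)"
      using that by (simp only: of_nat_le_iff) (simp add: mult_le_mono)
    moreover have "real (k * n) > 0" using that by simp
    ultimately have "1 \<le> real (m * j) / real (k * n)" by simp
    then show "1 \<le> F k n \<and> c0 \<le> F k n" "F k n * tau_phi M \<phi> (X k n) \<le> g (ln (real (m * j)))"
      using f[of k n] f_c0 that by (auto simp: F_def)
  qed
  have "phi_subgaussian M \<phi> (X k n)" if "k \<in> {1..m}" "n \<in> {1..j}" for k n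
    using sg that by simp
  then have "prob {\<omega> \<in> space M. array_max X m j \<omega> > g (ln (real (m * j))) * young_fenchel_inv \<phi> (ln (real (m * j)))}
          \<le> real (m * j) powr (1 - c0)"
    by (rule prob_array_max_gt_le[where F = F, OF N \<open>1 \<le> m\<close> \<open>1 \<le> j\<close> g_pos[OF \<open>ln (real (m * j)) \<ge> 0\<close>] _ F])
  then show ?thesis by (simp add: less_max_iff_disj)
qed

lemma summable_on_Times_mult:
  fixes f g :: "_ \<Rightarrow> real"
  assumes "f summable_on A" "g summable_on B"
    and "\<And>x. x \<in> A \<Longrightarrow> f x \<ge> 0" "\<And>y. y \<in> B \<Longrightarrow> g y \<ge> 0"
  shows "(\<lambda>(x, y). f x * g y) summable_on A \<times> B"
proof (rule summable_on_SigmaI)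
  show "((\<lambda>y. case (x, y) of (x, y) \<Rightarrow> f x * g y) has_sum f x * infsum g B) B" for x
    using has_sum_cmult_right[OF summable_iff_has_sum_infsum[THEN iffD1, OF assms(2)]] by simp
  show "(\<lambda>x. f x * infsum g B) summable_on A"
    using assms(1) by (rule summable_on_cmult_left)
qed (use assms(3,4) in auto)

lemma summable_on_powr_Times:
  assumes "\<beta> > 1"
  shows "(\<lambda>(m::nat, j::nat). real m powr (- \<beta>) * real j powr (- \<beta>)) summable_on {1..} \<times> {1..}"
proof -
  have "summable (\<lambda>n::nat. real n powr (- \<beta>))"
    using assms by (subst summable_real_powr_iff) simp
  then have "(\<lambda>n::nat. real n powr (- \<beta>)) summable_on UNIV"
    by (subst summable_on_UNIV_nonneg_real_iff) auto
  then have "(\<lambda>n::nat. real n powr (- \<beta>)) summable_on {1..}"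
    by (rule summable_on_subset) auto
  then show ?thesis by (intro summable_on_Times_mult) auto
qed

theorem corollary3:
  fixes M :: "'a measure" and \<phi> g f :: "real \<Rightarrow> real" and c0 \<alpha> :: real
    and X :: "nat \<Rightarrow> nat \<Rightarrow> 'a \<Rightarrow> real"
  assumes "prob_space M"
    and "N_function \<phi>"
    and "\<And>k n. 1 \<le> k \<Longrightarrow> 1 \<le> n \<Longrightarrow> phi_subgaussian M \<phi> (X k n)"
    and "\<And>x. 0 \<le> x \<Longrightarrow> g x > 0"
    and "mono_on {0..} g"
    and "\<And>x. 1 \<le> x \<Longrightarrow> f x > 0"
    and "\<And>m j k n. 1 \<le> k \<Longrightarrow> k \<le> m \<Longrightarrow> 1 \<le> n \<Longrightarrow> n \<le> j \<Longrightarrow>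
           f (real (m * j) / real (k * n)) * tau_phi M \<phi> (X k n) \<le> g (ln (real (m * j)))
         \<and> f (real (m * j) / real (k * n)) \<ge> 1"
    and "c0 > 0"
    and "\<And>x. 1 \<le> x \<Longrightarrow> f x \<ge> c0"
    and "\<alpha> > 2 - c0"
  shows "(\<lambda>(m, j). real (m * j) powr (- \<alpha>) *
            measure M {\<omega> \<in> space M.
              max (array_max X m j \<omega> - g (ln (real (m * j))) * young_fenchel_inv \<phi> (ln (real (m * j)))) 0 > 0})
         summable_on ({1..} \<times> {1..})"
proof -
  interpret prob_space M by (rule assms(1))
  define P where "P m j = prob {\<omega> \<in> space M. max (array_max X m j \<omega>
                    - g (ln (real (m * j))) * young_fenchel_inv \<phi> (ln (real (m * j)))) 0 > 0}" for m j
  define \<beta> where "\<beta> = \<alpha> + c0 - 1"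
  have "\<beta> > 1" using assms(10) by (simp add: \<beta>_def)
  have "real (m * j) powr (- \<alpha>) * P m j \<le> real m powr (- \<beta>) * real j powr (- \<beta>)"
    if "1 \<le> m" "1 \<le> j" for m j
  proof -
    have "real (m * j) powr (- \<alpha>) * P m j \<le> real (m * j) powr (- \<alpha>) * real (m * j) powr (1 - c0)"
      unfolding P_def
      using prob_array_max_excess_pos_le[where X = X and g = g and f = f,
              OF assms(2) that assms(3,4) assms(7) assms(9)]
      by (intro mult_left_mono) auto
    also have "\<dots> = real (m * j) powr (- \<beta>)"
      unfolding powr_add[symmetric] by (simp add: \<beta>_def algebra_simps)
    also have "\<dots> = real m powr (- \<beta>) * real j powr (- \<beta>)"
      by (simp add: powr_mult)
    finally show ?thesis .
  qed
  then show ?thesis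
    by (intro summable_on_comparison_test[OF summable_on_powr_Times[OF \<open>\<beta> > 1\<close>]]) (auto simp: P_def)
qed

end
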